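(* Let $X$ be a real Banach space, $k\in\mathbb N$, and $Y,Z$ closed subspaces with $Z\subseteq Y\subseteq X$. Suppose $Z$ is an $M$-ideal in $X$ and $Y/Z$ has property-$(k-U)$ in $X/Z$. Then $Y$ has property-$(k-U)$ in $X$.
   Context: $Z^\perp=\{x^*\in X^*:x^*|_Z=0\}$. $Z$ is an $M$-ideal in $X$ if there is a closed subspace $G$ of $X^*$ with $X^*=Z^\perp\oplus G$ and $\|u+g\|=\|u\|+\|g\|$ for $u\in Z^\perp,g\in G$. For a closed subspace $V$ of $E$ and $v^*\in V^*$, $HB(v^* )=\{e^*\in E^*:e^*|_V=v^*,\ \|e^*\|=\|v^*\|\}$; for a set $A$ and $a\in A$, $\dim A=\dim\operatorname{span}(A-a)$. $V$ has property-$(k-U)$ in $E$ if $\dim HB(v^* )\le k-1$ for all $v^*\in S_{V^*}$. $Y/Z$ is regarded as a subspace of $X/Z$ with the quotient norm. *)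

theory Defs
  imports "HOL-Analysis.Analysis"
begin

definition annihilator :: "'a::real_normed_vector set \<Rightarrow> ('a \<Rightarrow>\<^sub>L real) set" where
  "annihilator Z = {f. \<forall>z\<in>Z. blinfun_apply f z = 0}"

definition M_ideal :: "'a::real_normed_vector set \<Rightarrow> bool" where
  "M_ideal Z \<longleftrightarrow> (\<exists>G :: ('a \<Rightarrow>\<^sub>L real) set.
      subspace G \<and> closed G \<and>
      (\<forall>f. \<exists>u\<in>annihilator Z. \<exists>g\<in>G. f = u + g) \<and>
      annihilator Z \<inter> G = {0} \<and>
      (\<forall>u\<in>annihilator Z. \<forall>g\<in>G. norm (u + g) = norm u + norm g))"

definition quotient_norm :: "'a::real_normed_vector set \<Rightarrow> 'a \<Rightarrow> real" where
  "quotient_norm Z x = infdist x Z"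

text \<open>A normed space presented as X equipped with a (semi)norm p (X itself: p = norm;
  X/Z: p = quotient_norm Z, elements represented by their representatives).\<close>
definition lin_on :: "'a::real_vector set \<Rightarrow> ('a \<Rightarrow> real) \<Rightarrow> bool" where
  "lin_on V f \<longleftrightarrow> (\<forall>x\<in>V. \<forall>y\<in>V. f (x + y) = f x + f y) \<and> (\<forall>c. \<forall>x\<in>V. f (c *\<^sub>R x) = c * f x)"

definition bdd_fun_on :: "('a::real_vector \<Rightarrow> real) \<Rightarrow> 'a set \<Rightarrow> ('a \<Rightarrow> real) \<Rightarrow> bool" where
  "bdd_fun_on p V f \<longleftrightarrow> lin_on V f \<and> (\<exists>C. \<forall>x\<in>V. \<bar>f x\<bar> \<le> C * p x)"

definition fun_norm_on :: "('a::real_vector \<Rightarrow> real) \<Rightarrow> 'a set \<Rightarrow> ('a \<Rightarrow> real) \<Rightarrow> real" where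
  "fun_norm_on p V f = Sup {\<bar>f x\<bar> | x. x \<in> V \<and> p x \<le> 1}"

definition HB_set :: "('a::real_normed_vector \<Rightarrow> real) \<Rightarrow> 'a set \<Rightarrow> ('a \<Rightarrow> real) \<Rightarrow> ('a \<Rightarrow>\<^sub>L real) set" where
  "HB_set p V v = {e. bdd_fun_on p UNIV (blinfun_apply e) \<and>
                      (\<forall>x\<in>V. blinfun_apply e x = v x) \<and>
                      fun_norm_on p UNIV (blinfun_apply e) = fun_norm_on p V v}"

text \<open>dim A = dim span (A - a) for a in A; "dim A \<le> n" including finite-dimensionality.\<close>
definition set_dim_le :: "'b::real_vector set \<Rightarrow> nat \<Rightarrow> bool" where
  "set_dim_le A n \<longleftrightarrow> (\<forall>a\<in>A. (\<exists>B. finite B \<and> (\<lambda>x. x - a) ` A \<subseteq> span B) \<and>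
                                 dim (span ((\<lambda>x. x - a) ` A)) \<le> n)"

definition prop_kU :: "('a::real_normed_vector \<Rightarrow> real) \<Rightarrow> 'a set \<Rightarrow> nat \<Rightarrow> bool" where
  "prop_kU p V k \<longleftrightarrow> (\<forall>v. bdd_fun_on p V v \<and> fun_norm_on p V v = 1 \<longrightarrow>
                          set_dim_le (HB_set p V v) (k - 1))"

end

theory Submission
  imports Defs
begin

text \<open>
  Write every functional as e = u + g with u \<in> Z^perp and g \<in> G, so that
  ||e|| = ||u|| + ||g||. All Hahn--Banach extensions e of a norm-one functional v on Y
  agree on Z, hence (as G \<inter> Z^perp = 0) they share one G-component g0, and
  their Z^perp-components all have norm c = 1 - ||g0||. If c = 0 the extension is unique.
  Otherwise, since a functional in Z^perp has the same norm on X/Z as on X, the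
  rescaled components (e - g0)/c are Hahn--Banach extensions of the norm-one functional
  (v - g0)/c on Y/Z. So HB(v) lies in an affine image of a set of dimension at most k - 1.
\<close>

lemma dim_mono_finite_span:
  fixes S T B :: "'b::real_vector set"
  assumes "S \<subseteq> span T" "T \<subseteq> span B" "finite B"
  shows "dim S \<le> dim T"
proof -
  obtain A where A: "A \<subseteq> T" "independent A" "T \<subseteq> span A" "card A = dim T"
    by (rule basis_exists)
  have "finite A"
    using independent_span_bound[OF assms(3) A(2)] A(1) assms(2) by auto
  moreover have "S \<subseteq> span A"
    using assms(1) A(3) by (metis span_mono span_span subset_trans)
  ultimately have "dim S \<le> card A"
    by (intro dim_le_card)
  with A(4) show ?thesis
    by simp
qed

lemma set_dim_le_subset_singleton:
  assumes "A \<subseteq> {b}"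
  shows "set_dim_le (A :: 'b::real_vector set) n"
  unfolding set_dim_le_def
proof (intro ballI conjI)
  fix a assume "a \<in> A"
  with assms have "A = {a}"
    by blast
  then have sub: "(\<lambda>x. x - a) ` A \<subseteq> span {}"
    by simp
  then show "\<exists>B. finite B \<and> (\<lambda>x. x - a) ` A \<subseteq> span B"
    by blast
  have "dim ((\<lambda>x. x - a) ` A) \<le> card ({} :: 'b set)"
    using sub by (rule dim_le_card) simp
  then show "dim (span ((\<lambda>x. x - a) ` A)) \<le> n"
    by simp
qed

lemma set_dim_le_affine_image:
  assumes "set_dim_le (A :: 'b::real_vector set) n"
    and "A' \<subseteq> (\<lambda>x. c *\<^sub>R x + b) ` A"
  shows "set_dim_le A' n"
  unfolding set_dim_le_def
proof (intro ballI conjI)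
  fix a' assume "a' \<in> A'"
  then obtain a where a: "a \<in> A" "a' = c *\<^sub>R a + b"
    using assms(2) by auto
  define T where "T = (\<lambda>x. x - a) ` A"
  obtain B where B: "finite B" "T \<subseteq> span B" and dim_T: "dim (span T) \<le> n"
    using assms(1) a(1) unfolding set_dim_le_def T_def by blast
  have sub: "(\<lambda>x. x - a') ` A' \<subseteq> span T"
  proof
    fix y assume "y \<in> (\<lambda>x. x - a') ` A'"
    then obtain x' where x': "x' \<in> A'" "y = x' - a'"
      by blast
    then obtain x where x: "x \<in> A" "x' = c *\<^sub>R x + b"
      using assms(2) by blast
    have "y = c *\<^sub>R (x - a)"
      using x x'(2) a(2) by (simp add: algebra_simps)
    moreover have "x - a \<in> T"
      using x(1) unfolding T_def by blast
    ultimately show "y \<in> span T"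
      by (simp add: span_base span_scale)
  qed
  have "span T \<subseteq> span B"
    using B(2) by (metis span_mono span_span)
  with sub have "(\<lambda>x. x - a') ` A' \<subseteq> span B"
    by (rule order_trans)
  with B(1) show "\<exists>B. finite B \<and> (\<lambda>x. x - a') ` A' \<subseteq> span B"
    by blast
  show "dim (span ((\<lambda>x. x - a') ` A')) \<le> n"
    using dim_mono_finite_span[OF sub B(2) B(1)] dim_T by simp
qed

lemma fun_norm_on_le:
  assumes "x\<^sub>0 \<in> V" "p x\<^sub>0 \<le> 1"
    and "\<And>x. x \<in> V \<Longrightarrow> p x \<le> 1 \<Longrightarrow> \<bar>f x\<bar> \<le> C"
  shows "fun_norm_on p V f \<le> C"
  unfolding fun_norm_on_def
proof (rule cSup_least)
  show "{\<bar>f x\<bar> |x. x \<in> V \<and> p x \<le> 1} \<noteq> {}"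
    using assms(1,2) by blast
qed (use assms(3) in blast)

lemma abs_le_fun_norm_on:
  assumes "bdd_fun_on p V f" "\<And>y. 0 \<le> p y" "x \<in> V" "p x \<le> 1"
  shows "\<bar>f x\<bar> \<le> fun_norm_on p V f"
proof -
  obtain C where C: "\<forall>y\<in>V. \<bar>f y\<bar> \<le> C * p y"
    using assms(1) unfolding bdd_fun_on_def by blast
  have "\<bar>f y\<bar> \<le> max C 0" if "y \<in> V" "p y \<le> 1" for y
  proof -
    have "C * p y \<le> max C 0 * p y"
      using assms(2) by (intro mult_right_mono) auto
    also have "\<dots> \<le> max C 0"
      using that(2) by (simp add: mult_left_le)
    finally show ?thesis
      using C that(1) by fastforce
  qed
  then have "bdd_above {\<bar>f y\<bar> | y. y \<in> V \<and> p y \<le> 1}"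
    by (intro bdd_aboveI) auto
  then show ?thesis
    unfolding fun_norm_on_def using assms(3,4) by (intro cSup_upper) auto
qed

lemma lin_on_blinfun: "lin_on V (blinfun_apply e)"
  unfolding lin_on_def by (simp add: blinfun.add_right blinfun.scaleR_right)

lemma bdd_fun_on_norm_blinfun: "bdd_fun_on norm V (blinfun_apply e)"
  unfolding bdd_fun_on_def using lin_on_blinfun norm_blinfun by (metis real_norm_def)

lemma fun_norm_on_norm_blinfun:
  "fun_norm_on norm UNIV (blinfun_apply e) = norm (e :: 'a::real_normed_vector \<Rightarrow>\<^sub>L real)"
proof (rule antisym)
  show "fun_norm_on norm UNIV (blinfun_apply e) \<le> norm e"
  proof (rule fun_norm_on_le[of 0])
    fix x :: 'a assume "norm x \<le> 1"
    then have "norm e * norm x \<le> norm e"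
      by (simp add: mult_left_le)
    then show "\<bar>blinfun_apply e x\<bar> \<le> norm e"
      using norm_blinfun[of e x] by simp
  qed auto
next
  let ?s = "fun_norm_on norm UNIV (blinfun_apply e)"
  have unit: "\<bar>blinfun_apply e x\<bar> \<le> ?s" if "norm x \<le> 1" for x
    by (rule abs_le_fun_norm_on[OF bdd_fun_on_norm_blinfun]) (simp_all add: that)
  show "norm e \<le> ?s"
  proof (rule norm_blinfun_bound)
    show "0 \<le> ?s"
      using unit[of 0] by simp
  next
    fix x
    show "norm (blinfun_apply e x) \<le> ?s * norm x"
    proof (cases "x = 0")
      case False
      have "\<bar>blinfun_apply e x\<bar> / norm x = \<bar>blinfun_apply e (x /\<^sub>R norm x)\<bar>"
        by (simp add: blinfun.scaleR_right abs_mult divide_inverse_commute)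
      also have "\<dots> \<le> ?s"
        using unit False by simp
      finally show ?thesis
        using False by (simp add: divide_le_eq)
    qed simp
  qed
qed

lemma quotient_norm_nonneg: "0 \<le> quotient_norm Z x"
  by (simp add: quotient_norm_def infdist_nonneg)

lemma quotient_norm_le_norm: "0 \<in> Z \<Longrightarrow> quotient_norm Z x \<le> norm x"
  unfolding quotient_norm_def using infdist_le[of 0 Z x] by (simp add: dist_norm)

lemma abs_blinfun_le_quotient_norm:
  assumes "u \<in> annihilator Z" "Z \<noteq> {}"
  shows "\<bar>blinfun_apply u x\<bar> \<le> norm u * quotient_norm Z x"
proof -
  have dist_bound: "\<bar>blinfun_apply u x\<bar> \<le> norm u * dist x z" if "z \<in> Z" for z
  proof -
    have "blinfun_apply u x = blinfun_apply u (x - z)"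
      using assms(1) that unfolding annihilator_def by (simp add: blinfun.diff_right)
    then show ?thesis
      using norm_blinfun[of u "x - z"] by (simp add: dist_norm)
  qed
  show ?thesis
  proof (cases "u = 0")
    case False
    then have "\<bar>blinfun_apply u x\<bar> / norm u \<le> (INF z\<in>Z. dist x z)"
      using assms(2) dist_bound by (intro cINF_greatest) (auto simp: divide_le_eq mult.commute)
    then show ?thesis
      using False assms(2) unfolding quotient_norm_def
      by (simp add: infdist_notempty divide_le_eq mult.commute)
  qed simp
qed

lemma bdd_fun_on_quotient_annihilator:
  assumes "u \<in> annihilator Z" "Z \<noteq> {}"
  shows "bdd_fun_on (quotient_norm Z) V (blinfun_apply u)"
  unfolding bdd_fun_on_def using lin_on_blinfun abs_blinfun_le_quotient_norm[OF assms] by blast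

lemma fun_norm_on_quotient_annihilator:
  assumes "u \<in> annihilator Z" "0 \<in> Z"
  shows "fun_norm_on (quotient_norm Z) UNIV (blinfun_apply u) = norm u"
proof (rule antisym)
  show "fun_norm_on (quotient_norm Z) UNIV (blinfun_apply u) \<le> norm u"
  proof (rule fun_norm_on_le[of 0])
    fix x assume "quotient_norm Z x \<le> 1"
    then have "norm u * quotient_norm Z x \<le> norm u"
      by (simp add: mult_left_le)
    moreover have "\<bar>blinfun_apply u x\<bar> \<le> norm u * quotient_norm Z x"
      using assms by (intro abs_blinfun_le_quotient_norm) auto
    ultimately show "\<bar>blinfun_apply u x\<bar> \<le> norm u"
      by linarith
  qed (use assms(2) in \<open>simp_all add: quotient_norm_def\<close>)
next
  let ?s = "fun_norm_on (quotient_norm Z) UNIV (blinfun_apply u)"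
  have "\<bar>blinfun_apply u x\<bar> \<le> ?s" if "norm x \<le> 1" for x
  proof (rule abs_le_fun_norm_on)
    show "bdd_fun_on (quotient_norm Z) UNIV (blinfun_apply u)"
      using assms by (intro bdd_fun_on_quotient_annihilator) auto
    show "quotient_norm Z x \<le> 1"
      using quotient_norm_le_norm[OF assms(2)] that by (rule order_trans)
  qed (simp_all add: quotient_norm_nonneg)
  then have "fun_norm_on norm UNIV (blinfun_apply u) \<le> ?s"
    by (intro fun_norm_on_le[of 0]) auto
  then show "norm u \<le> ?s"
    by (simp add: fun_norm_on_norm_blinfun)
qed

locale annihilator_L_summand =
  fixes Z :: "'a::real_normed_vector set" and G :: "('a \<Rightarrow>\<^sub>L real) set"
  assumes subspace_G: "subspace G"
    and decompose: "\<exists>u\<in>annihilator Z. \<exists>g\<in>G. f = u + g"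
    and annihilator_Int_G: "annihilator Z \<inter> G = {0}"
    and norm_add: "u \<in> annihilator Z \<Longrightarrow> g \<in> G \<Longrightarrow> norm (u + g) = norm u + norm g"

lemma M_ideal_imp_annihilator_L_summand:
  assumes "M_ideal Z"
  obtains G where "annihilator_L_summand Z G"
proof -
  from assms obtain G where "subspace G" "\<forall>f. \<exists>u\<in>annihilator Z. \<exists>g\<in>G. f = u + g"
    "annihilator Z \<inter> G = {0}" "\<forall>u\<in>annihilator Z. \<forall>g\<in>G. norm (u + g) = norm u + norm g"
    unfolding M_ideal_def by blast
  then have "annihilator_L_summand Z G"
    by unfold_locales auto
  then show ?thesis
    using that by blast
qed

context annihilator_L_summand
begin

lemma G_component_unique:
  assumes "u \<in> annihilator Z" "g \<in> G" "u' \<in> annihilator Z" "g' \<in> G"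
    and "\<forall>z\<in>Z. blinfun_apply (u + g) z = blinfun_apply (u' + g') z"
  shows "g = g'"
proof -
  have "g - g' \<in> annihilator Z"
    using assms(1,3,5) unfolding annihilator_def by (simp add: blinfun.add_left blinfun.diff_left)
  moreover have "g - g' \<in> G"
    using subspace_G assms(2,4) by (rule subspace_diff)
  ultimately have "g - g' \<in> annihilator Z \<inter> G"
    by blast
  then show ?thesis
    using annihilator_Int_G by simp
qed

lemma HB_set_norm_minus_G_component:
  assumes "Z \<subseteq> Y"
    and e\<^sub>0: "e\<^sub>0 \<in> HB_set norm Y v" "e\<^sub>0 = u\<^sub>0 + g\<^sub>0" "u\<^sub>0 \<in> annihilator Z" "g\<^sub>0 \<in> G"
    and e: "e \<in> HB_set norm Y v"
  shows "e - g\<^sub>0 \<in> annihilator Z" and "norm (e - g\<^sub>0) = norm u\<^sub>0"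
proof -
  obtain u g where u: "u \<in> annihilator Z" and g: "g \<in> G" and e_eq: "e = u + g"
    using decompose by blast
  have "\<forall>y\<in>Y. blinfun_apply e y = blinfun_apply e\<^sub>0 y"
    using e e\<^sub>0(1) unfolding HB_set_def by simp
  then have "\<forall>z\<in>Z. blinfun_apply (u + g) z = blinfun_apply (u\<^sub>0 + g\<^sub>0) z"
    unfolding e_eq[symmetric] e\<^sub>0(2)[symmetric] using assms(1) by blast
  then have "g = g\<^sub>0"
    by (rule G_component_unique[OF u g e\<^sub>0(3,4)])
  then show "e - g\<^sub>0 \<in> annihilator Z"
    using e_eq u by simp
  have "norm e = fun_norm_on norm Y v" "norm e\<^sub>0 = fun_norm_on norm Y v"
    using e e\<^sub>0(1) unfolding HB_set_def by (simp_all add: fun_norm_on_norm_blinfun)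
  moreover have "norm e = norm u + norm g\<^sub>0"
    using norm_add[OF u g] e_eq \<open>g = g\<^sub>0\<close> by simp
  moreover have "norm e\<^sub>0 = norm u\<^sub>0 + norm g\<^sub>0"
    using norm_add[OF e\<^sub>0(3,4)] e\<^sub>0(2) by simp
  ultimately show "norm (e - g\<^sub>0) = norm u\<^sub>0"
    using e_eq \<open>g = g\<^sub>0\<close> by simp
qed

lemma quotient_functional_normalized:
  assumes "Z \<subseteq> Y" "0 \<in> Z" "fun_norm_on norm Y v = 1"
    and e\<^sub>0: "e\<^sub>0 \<in> HB_set norm Y v" "e\<^sub>0 = u\<^sub>0 + g\<^sub>0" "u\<^sub>0 \<in> annihilator Z" "g\<^sub>0 \<in> G"
    and "u\<^sub>0 \<noteq> 0"
  defines "w \<equiv> blinfun_apply (u\<^sub>0 /\<^sub>R norm u\<^sub>0)" \<comment> \<open>on Y, w = (v - g0)/||u0||\<close>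
  shows "bdd_fun_on (quotient_norm Z) Y w" and "fun_norm_on (quotient_norm Z) Y w = 1"
proof -
  let ?q = "quotient_norm Z" and ?c = "norm u\<^sub>0"
  have c_pos: "?c > 0"
    using \<open>u\<^sub>0 \<noteq> 0\<close> by simp
  have w_annihilates: "u\<^sub>0 /\<^sub>R ?c \<in> annihilator Z"
    using e\<^sub>0(3) unfolding annihilator_def by (simp add: blinfun.scaleR_left)
  have "0 \<in> Y" "?q 0 = 0"
    using assms(1,2) by (auto simp: quotient_norm_def)
  show bdd_w: "bdd_fun_on ?q Y w"
    unfolding w_def using w_annihilates assms(2) by (intro bdd_fun_on_quotient_annihilator) auto
  show "fun_norm_on ?q Y w = 1"
  proof (rule antisym)
    show "fun_norm_on ?q Y w \<le> 1"
    proof (rule fun_norm_on_le[OF \<open>0 \<in> Y\<close>])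
      fix y assume "?q y \<le> 1"
      moreover have "\<bar>w y\<bar> \<le> norm (u\<^sub>0 /\<^sub>R ?c) * ?q y"
        unfolding w_def using w_annihilates assms(2) by (intro abs_blinfun_le_quotient_norm) auto
      ultimately show "\<bar>w y\<bar> \<le> 1"
        using c_pos by simp
    qed (simp add: \<open>?q 0 = 0\<close>)
  next
    let ?s = "fun_norm_on ?q Y w"
    have "norm e\<^sub>0 = 1"
      using e\<^sub>0(1) assms(3) unfolding HB_set_def by (simp add: fun_norm_on_norm_blinfun)
    then have c_g\<^sub>0: "?c + norm g\<^sub>0 = 1"
      using norm_add[OF e\<^sub>0(3,4)] e\<^sub>0(2) by simp
    have "\<bar>v y\<bar> \<le> ?c * ?s + norm g\<^sub>0" if "y \<in> Y" "norm y \<le> 1" for y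
    proof -
      have "v y = blinfun_apply u\<^sub>0 y + blinfun_apply g\<^sub>0 y"
        using e\<^sub>0(1,2) that(1) unfolding HB_set_def by (simp add: blinfun.add_left)
      moreover have "blinfun_apply u\<^sub>0 y = ?c * w y"
        using c_pos unfolding w_def by (simp add: blinfun.scaleR_left)
      ultimately have "\<bar>v y\<bar> \<le> ?c * \<bar>w y\<bar> + \<bar>blinfun_apply g\<^sub>0 y\<bar>"
        using abs_triangle_ineq[of "?c * w y" "blinfun_apply g\<^sub>0 y"] by (simp add: abs_mult)
      also have "\<dots> \<le> ?c * ?s + norm g\<^sub>0"
      proof (intro add_mono mult_left_mono)
        show "\<bar>w y\<bar> \<le> ?s"
        proof (rule abs_le_fun_norm_on[OF bdd_w quotient_norm_nonneg \<open>y \<in> Y\<close>])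
          show "?q y \<le> 1"
            using quotient_norm_le_norm[OF assms(2)] that(2) by (rule order_trans)
        qed
        have "norm g\<^sub>0 * norm y \<le> norm g\<^sub>0"
          using that(2) by (simp add: mult_left_le)
        then show "\<bar>blinfun_apply g\<^sub>0 y\<bar> \<le> norm g\<^sub>0"
          using norm_blinfun[of g\<^sub>0 y] by simp
      qed simp
      finally show ?thesis .
    qed
    then have "fun_norm_on norm Y v \<le> ?c * ?s + norm g\<^sub>0"
      using \<open>0 \<in> Y\<close> by (intro fun_norm_on_le[of 0]) auto
    then have "?c * 1 \<le> ?c * ?s"
      using assms(3) c_g\<^sub>0 by simp
    then show "1 \<le> ?s"
      using c_pos by simp
  qed
qed

lemma HB_set_norm_subset_affine_image:
  assumes "Z \<subseteq> Y" "0 \<in> Z" "fun_norm_on norm Y v = 1"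
    and e\<^sub>0: "e\<^sub>0 \<in> HB_set norm Y v" "e\<^sub>0 = u\<^sub>0 + g\<^sub>0" "u\<^sub>0 \<in> annihilator Z" "g\<^sub>0 \<in> G"
    and "u\<^sub>0 \<noteq> 0"
  defines "w \<equiv> blinfun_apply (u\<^sub>0 /\<^sub>R norm u\<^sub>0)"
  shows "HB_set norm Y v \<subseteq> (\<lambda>x. norm u\<^sub>0 *\<^sub>R x + g\<^sub>0) ` HB_set (quotient_norm Z) Y w"
proof
  fix e assume e: "e \<in> HB_set norm Y v"
  let ?c = "norm u\<^sub>0"
  define u where "u = (e - g\<^sub>0) /\<^sub>R ?c"
  have c_pos: "?c > 0"
    using \<open>u\<^sub>0 \<noteq> 0\<close> by simp
  note component = HB_set_norm_minus_G_component[OF assms(1) e\<^sub>0 e]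
  have u_annihilates: "u \<in> annihilator Z"
    using component(1) unfolding u_def annihilator_def by (simp add: blinfun.scaleR_left)
  have "norm u = 1"
    using component(2) c_pos unfolding u_def by simp
  then have "fun_norm_on (quotient_norm Z) UNIV (blinfun_apply u) = fun_norm_on (quotient_norm Z) Y w"
    using fun_norm_on_quotient_annihilator[OF u_annihilates assms(2)]
      quotient_functional_normalized(2)[OF assms(1-3) e\<^sub>0 \<open>u\<^sub>0 \<noteq> 0\<close>] unfolding w_def
    by simp
  moreover have "blinfun_apply u y = w y" if "y \<in> Y" for y
  proof -
    have "blinfun_apply e y = v y" "v y = blinfun_apply u\<^sub>0 y + blinfun_apply g\<^sub>0 y"
      using e e\<^sub>0(1,2) that unfolding HB_set_def by (simp_all add: blinfun.add_left)
    then show ?thesis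
      unfolding u_def w_def by (simp add: blinfun.scaleR_left blinfun.diff_left)
  qed
  ultimately have "u \<in> HB_set (quotient_norm Z) Y w"
    unfolding HB_set_def using bdd_fun_on_quotient_annihilator[OF u_annihilates] assms(2) by blast
  moreover have "e = ?c *\<^sub>R u + g\<^sub>0"
    unfolding u_def using c_pos by simp
  ultimately show "e \<in> (\<lambda>x. ?c *\<^sub>R x + g\<^sub>0) ` HB_set (quotient_norm Z) Y w"
    by blast
qed

end

theorem theorem4p9:
  fixes Y Z :: "'a::banach set"
    and k :: nat
  assumes "k \<ge> 1"
    and "subspace Y" and "closed Y"
    and "subspace Z" and "closed Z"
    and "Z \<subseteq> Y"
    and "M_ideal Z"
    and "prop_kU (quotient_norm Z) Y k"
  shows "prop_kU norm Y k"
  unfolding prop_kU_def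
proof (intro allI impI)
  obtain G where "annihilator_L_summand Z G"
    using assms(7) by (rule M_ideal_imp_annihilator_L_summand)
  then interpret annihilator_L_summand Z G .
  have "0 \<in> Z"
    using assms(4) by (rule subspace_0)
  fix v assume v: "bdd_fun_on norm Y v \<and> fun_norm_on norm Y v = 1"
  show "set_dim_le (HB_set norm Y v) (k - 1)"
  proof (cases "HB_set norm Y v = {}")
    case False
    then obtain e\<^sub>0 where e\<^sub>0: "e\<^sub>0 \<in> HB_set norm Y v" by blast
    obtain u\<^sub>0 g\<^sub>0 where e\<^sub>0_eq: "e\<^sub>0 = u\<^sub>0 + g\<^sub>0" "u\<^sub>0 \<in> annihilator Z" "g\<^sub>0 \<in> G"
      using decompose by blast
    note component = HB_set_norm_minus_G_component[OF assms(6) e\<^sub>0 e\<^sub>0_eq]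
    show ?thesis
    proof (cases "u\<^sub>0 = 0")
      case True
      then have "HB_set norm Y v \<subseteq> {g\<^sub>0}"
        using component(2) by auto
      then show ?thesis by (rule set_dim_le_subset_singleton)
    next
      case False
      note hyps = assms(6) \<open>0 \<in> Z\<close> conjunct2[OF v] e\<^sub>0 e\<^sub>0_eq False
      have "set_dim_le (HB_set (quotient_norm Z) Y (blinfun_apply (u\<^sub>0 /\<^sub>R norm u\<^sub>0))) (k - 1)"
        using assms(8) quotient_functional_normalized[OF hyps] unfolding prop_kU_def by blast
      then show ?thesis
        using HB_set_norm_subset_affine_image[OF hyps] by (rule set_dim_le_affine_image)
    qed
  qed (simp add: set_dim_le_def)
qed

end
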